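(* Let $n\ge2$ and $T\subset\mathbb{N}$. If $\mathcal{P}_T$ is a PULB-space for dimension $n$, then the quadrature rule in condition (i) of the definition of PULB-space is unique; i.e., any two quadrature rules with nodes in $[-1,1]$ and positive weights that are exact on $\mathcal{P}_T$ and satisfy condition (ii) have the same nodes and the same weights.
   Context: $d\mu_n(t)=\gamma_n(1-t^2)^{(n-3)/2}dt$ is the probability measure on $[-1,1]$ with this density; $P_i^{(n)}$ is the Gegenbauer polynomial of degree $i$ (Jacobi with $\alpha=\beta=(n-3)/2$, normalized $P_i^{(n)}(1)=1$). $\mathcal{P}_T=\mathrm{span}\{P_i^{(n)}:i\in T\cup\{0\}\}$. A function $h:[-1,1]\to[0,+\infty]$, continuous on $[-1,1]$ and finite on $[-1,1)$, is absolutely monotone if $h^{(j)}(t)\ge0$ for all $j\ge0$, $t\in[-1,1)$. $\mathcal{L}(n,T,h)=\{f\in\mathcal{P}_T: f\le h\text{ on }[-1,1]\}$. A quadrature rule exact on $\mathcal{P}_T$ consists of nodes $\{\alpha_i\}\subset[-1,1]$ and weights $\{\rho_i\}\subset(0,1)$ with $\int_{-1}^1f\,d\mu_n=\sum_i\rho_if(\alpha_i)$ for all $f\in\mathcal{P}_T$. $\mathcal{P}_T$ is a PULB-space for dimension $n$ if (i) there is a quadrature rule with positive weights exact on $\mathcal{P}_T$ and (ii) for every absolutely monotone $h$ some $f\in\mathcal{L}(n,T,h)$ agrees with $h$ at the nodes of that rule. *)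

theory Defs
  imports "HOL-Analysis.Analysis" "HOL-Library.Extended_Real"
begin

text \<open>Normalized Gegenbauer polynomials P_i^{(n)} (Jacobi with alpha = beta = (n-3)/2,
  normalized so that P_i^{(n)}(1) = 1), given by the standard three-term recurrence
  (i + n - 2) P_{i+1} = (2i + n - 2) t P_i - i P_{i-1}, P_0 = 1, P_1 = t.\<close>
fun gegenbauer :: "nat \<Rightarrow> nat \<Rightarrow> real \<Rightarrow> real" where
  "gegenbauer n 0 t = 1"
| "gegenbauer n (Suc 0) t = t"
| "gegenbauer n (Suc (Suc i)) t =
     ((2 * real (Suc i) + real n - 2) * t * gegenbauer n (Suc i) t
       - real (Suc i) * gegenbauer n i t) / (real (Suc i) + real n - 2)"

definition mu_density :: "nat \<Rightarrow> real \<Rightarrow> real" where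
  "mu_density n t = (1 - t\<^sup>2) powr ((real n - 3) / 2)"

definition gamma_const :: "nat \<Rightarrow> real" where
  "gamma_const n = 1 / (LINT t:{-1..1}|lborel. mu_density n t)"

definition mu_integral :: "nat \<Rightarrow> (real \<Rightarrow> real) \<Rightarrow> real" where
  "mu_integral n f = gamma_const n * (LINT t:{-1..1}|lborel. mu_density n t * f t)"

definition P_space :: "nat \<Rightarrow> nat set \<Rightarrow> (real \<Rightarrow> real) set" where
  "P_space n T = {f. \<exists>S c. finite S \<and> S \<subseteq> T \<union> {0} \<and>
                     f = (\<lambda>t. \<Sum>i\<in>S. c i * gegenbauer n i t)}"

definition abs_monotone :: "(real \<Rightarrow> ereal) \<Rightarrow> bool" where
  "abs_monotone h \<longleftrightarrow>
     continuous_on {-1..1} h \<and>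
     (\<forall>t\<in>{-1..1}. 0 \<le> h t) \<and>
     (\<forall>t\<in>{-1..<1}. h t \<noteq> \<infinity>) \<and>
     (\<exists>D :: nat \<Rightarrow> real \<Rightarrow> real.
        (\<forall>t\<in>{-1..<1}. D 0 t = real_of_ereal (h t)) \<and>
        (\<forall>j. \<forall>t\<in>{-1..<1}.
            (D j has_real_derivative D (Suc j) t) (at t within {-1..<1}) \<and> 0 \<le> D j t))"

definition L_set :: "nat \<Rightarrow> nat set \<Rightarrow> (real \<Rightarrow> ereal) \<Rightarrow> (real \<Rightarrow> real) set" where
  "L_set n T h = {f \<in> P_space n T. \<forall>t\<in>{-1..1}. ereal (f t) \<le> h t}"

definition quadrature_rule :: "nat \<Rightarrow> nat set \<Rightarrow> real set \<Rightarrow> (real \<Rightarrow> real) \<Rightarrow> bool" where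
  "quadrature_rule n T A \<rho> \<longleftrightarrow>
     finite A \<and> A \<subseteq> {-1..1} \<and> (\<forall>a\<in>A. 0 < \<rho> a \<and> \<rho> a < 1) \<and>
     (\<forall>f\<in>P_space n T. mu_integral n f = (\<Sum>a\<in>A. \<rho> a * f a))"

definition interpolation_condition :: "nat \<Rightarrow> nat set \<Rightarrow> real set \<Rightarrow> bool" where
  "interpolation_condition n T A \<longleftrightarrow>
     (\<forall>h. abs_monotone h \<longrightarrow> (\<exists>f\<in>L_set n T h. \<forall>a\<in>A. ereal (f a) = h a))"

definition PULB_rule :: "nat \<Rightarrow> nat set \<Rightarrow> real set \<Rightarrow> (real \<Rightarrow> real) \<Rightarrow> bool" where
  "PULB_rule n T A \<rho> \<longleftrightarrow> quadrature_rule n T A \<rho> \<and> interpolation_condition n T A"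

definition PULB_space :: "nat \<Rightarrow> nat set \<Rightarrow> bool" where
  "PULB_space n T \<longleftrightarrow> (\<exists>A \<rho>. PULB_rule n T A \<rho>)"

end

theory Submission
  imports Defs "HOL-Computational_Algebra.Polynomial"
begin

text \<open>If two rules both satisfy condition (ii), take an absolutely monotone \<open>h\<close> and the
  polynomial \<open>f \<le> h\<close> interpolating \<open>h\<close> at the nodes of the first rule; exactness of both rules
  gives \<open>\<Sum> \<rho>\<^sub>1 h = \<integral> f d\<mu>\<^sub>n = \<Sum> \<rho>\<^sub>2 f \<le> \<Sum> \<rho>\<^sub>2 h\<close>, and by symmetry the two discrete measures
  integrate every absolutely monotone function alike. The functions \<open>(1 + t)\<^sup>k\<close> are absolutely
  monotone, and their integrals determine a finitely supported measure (a Vandermonde argument),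
  so nodes and weights coincide.\<close>

definition shifted_power_deriv :: "nat \<Rightarrow> nat \<Rightarrow> real \<Rightarrow> real" where
  "shifted_power_deriv k j t = (if j \<le> k then fact k / fact (k - j) * (1 + t) ^ (k - j) else 0)"

lemma shifted_power_deriv_has_derivative:
  "(shifted_power_deriv k j has_real_derivative shifted_power_deriv k (Suc j) t) (at t within S)"
proof (cases "j < k")
  case True
  have fact_split: "fact (k - j) = real (k - j) * (fact (k - Suc j) :: real)"
    using fact_reduce[of "k - j"] True by (simp add: Suc_diff_Suc del: of_nat_diff)
  have "((\<lambda>t. fact k / fact (k - j) * (1 + t) ^ (k - j)) has_real_derivative
        fact k / fact (k - j) * (real (k - j) * (1 + t) ^ (k - j - 1))) (at t within S)"
    by (auto intro!: derivative_eq_intros)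
  moreover have "fact k / fact (k - j) * (real (k - j) * (1 + t) ^ (k - j - 1))
     = (fact k / fact (k - Suc j) * (1 + t) ^ (k - Suc j) :: real)"
    using True by (simp add: fact_split field_simps)
  ultimately show ?thesis
    using True unfolding shifted_power_deriv_def by (simp add: Suc_leI less_imp_le)
next
  case False
  then show ?thesis
    unfolding shifted_power_deriv_def by (cases "j = k") (auto intro!: derivative_eq_intros)
qed

lemma abs_monotone_shifted_power: "abs_monotone (\<lambda>t. ereal ((1 + t) ^ k))"
  unfolding abs_monotone_def
proof (intro conjI)
  show "continuous_on {-1..1} (\<lambda>t. ereal ((1 + t) ^ k))"
    by (intro continuous_intros)
  show "\<exists>D. (\<forall>t\<in>{-1..<1}. D 0 t = real_of_ereal (ereal ((1 + t) ^ k))) \<and>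
        (\<forall>j. \<forall>t\<in>{-1..<1}. (D j has_real_derivative D (Suc j) t) (at t within {-1..<1}) \<and> 0 \<le> D j t)"
    by (rule exI[of _ "shifted_power_deriv k"])
      (simp add: shifted_power_deriv_has_derivative, simp add: shifted_power_deriv_def)
qed auto

lemma PULB_rule_sum_le:
  fixes g :: "real \<Rightarrow> real"
  assumes rule1: "PULB_rule n T A1 \<rho>1" and rule2: "quadrature_rule n T A2 \<rho>2"
    and g: "abs_monotone (\<lambda>t. ereal (g t))"
  shows "(\<Sum>a\<in>A1. \<rho>1 a * g a) \<le> (\<Sum>a\<in>A2. \<rho>2 a * g a)"
proof -
  obtain f where f: "f \<in> L_set n T (\<lambda>t. ereal (g t))" and f_nodes: "\<forall>a\<in>A1. f a = g a"
    using rule1 g unfolding PULB_rule_def interpolation_condition_def by auto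
  then have f_P: "f \<in> P_space n T" and f_le: "\<forall>t\<in>{-1..1}. f t \<le> g t"
    by (auto simp: L_set_def)
  have "(\<Sum>a\<in>A1. \<rho>1 a * g a) = (\<Sum>a\<in>A1. \<rho>1 a * f a)"
    using f_nodes by simp
  also have "\<dots> = mu_integral n f"
    using rule1 f_P by (simp add: PULB_rule_def quadrature_rule_def)
  also have "\<dots> = (\<Sum>a\<in>A2. \<rho>2 a * f a)"
    using rule2 f_P by (simp add: quadrature_rule_def)
  also have "\<dots> \<le> (\<Sum>a\<in>A2. \<rho>2 a * g a)"
    using rule2 f_le by (intro sum_mono) (auto simp: quadrature_rule_def subset_iff)
  finally show ?thesis .
qed

lemma weights_zero_if_moments_zero:
  fixes w :: "'b \<Rightarrow> 'a::field" and x :: "'b \<Rightarrow> 'a"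
  assumes S: "finite S" and x: "inj_on x S"
    and moments: "\<And>k. (\<Sum>a\<in>S. w a * x a ^ k) = 0" and a0: "a0 \<in> S"
  shows "w a0 = 0"
proof -
  define q where "q = (\<Prod>b\<in>S - {a0}. [:- x b, 1:])"
  have poly_q: "poly q y = (\<Prod>b\<in>S - {a0}. y - x b)" for y
    unfolding q_def poly_prod by simp
  have "(\<Sum>a\<in>S. w a * poly q (x a)) = (\<Sum>i\<le>degree q. coeff q i * (\<Sum>a\<in>S. w a * x a ^ i))"
    by (simp add: poly_altdef sum_distrib_left mult_ac sum.swap[of _ S])
  also have "\<dots> = 0"
    using moments by simp
  finally have "(\<Sum>a\<in>S. w a * poly q (x a)) = 0" .
  moreover have "poly q (x a) = 0" if "a \<in> S - {a0}" for a
    unfolding poly_q using S that by (intro prod_zero) auto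
  then have "(\<Sum>a\<in>S. w a * poly q (x a)) = w a0 * poly q (x a0)"
    using S a0 by (subst sum.remove[OF S a0]) simp
  moreover have "poly q (x a0) \<noteq> 0"
    unfolding poly_q using S x a0 by (auto simp: inj_on_def)
  ultimately show ?thesis
    by simp
qed

lemma weighted_node_sets_eq_if_moments_eq:
  fixes \<rho>1 \<rho>2 :: "'b \<Rightarrow> 'a::field" and x :: "'b \<Rightarrow> 'a"
  assumes fin: "finite A1" "finite A2" and x: "inj_on x (A1 \<union> A2)"
    and nonzero: "\<forall>a\<in>A1. \<rho>1 a \<noteq> 0" "\<forall>a\<in>A2. \<rho>2 a \<noteq> 0"
    and moments: "\<And>k. (\<Sum>a\<in>A1. \<rho>1 a * x a ^ k) = (\<Sum>a\<in>A2. \<rho>2 a * x a ^ k)"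
  shows "A1 = A2 \<and> (\<forall>a\<in>A1. \<rho>1 a = \<rho>2 a)"
proof -
  define w where "w a = (if a \<in> A1 then \<rho>1 a else 0) - (if a \<in> A2 then \<rho>2 a else 0)" for a
  have restrict: "(\<Sum>a\<in>A1 \<union> A2. (if a \<in> A then \<rho> a else 0) * x a ^ k) = (\<Sum>a\<in>A. \<rho> a * x a ^ k)"
    if "A \<subseteq> A1 \<union> A2" for A \<rho> k
  proof -
    have "(\<Sum>a\<in>A1 \<union> A2. (if a \<in> A then \<rho> a else 0) * x a ^ k)
        = (\<Sum>a\<in>A1 \<union> A2. if a \<in> A then \<rho> a * x a ^ k else 0)"
      by (rule sum.cong) simp_all
    also have "\<dots> = (\<Sum>a\<in>(A1 \<union> A2) \<inter> A. \<rho> a * x a ^ k)"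
      using fin by (rule sum.inter_restrict[symmetric, OF finite_UnI])
    finally show ?thesis
      using that by (simp add: Int_absorb1)
  qed
  have "(\<Sum>a\<in>A1 \<union> A2. w a * x a ^ k) = 0" for k
    using moments[of k] by (simp add: w_def left_diff_distrib sum_subtractf restrict)
  then have w_zero: "w a = 0" if "a \<in> A1 \<union> A2" for a
    using weights_zero_if_moments_zero[OF _ x _ that] fin by blast
  have "a \<in> A2 \<and> \<rho>1 a = \<rho>2 a" if "a \<in> A1" for a
    using w_zero[of a] nonzero(1) that by (cases "a \<in> A2") (simp_all add: w_def)
  moreover have "a \<in> A1" if "a \<in> A2" for a
    using w_zero[of a] nonzero(2) that by (cases "a \<in> A1") (simp_all add: w_def)
  ultimately show ?thesis
    by blast
qed

theorem corollary4p9: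
  fixes n :: nat and T :: "nat set"
    and A1 A2 :: "real set" and \<rho>1 \<rho>2 :: "real \<Rightarrow> real"
  assumes "n \<ge> 2"
    and "PULB_space n T"
    and "PULB_rule n T A1 \<rho>1"
    and "PULB_rule n T A2 \<rho>2"
  shows "A1 = A2 \<and> (\<forall>a\<in>A1. \<rho>1 a = \<rho>2 a)"
proof -
  have rules: "quadrature_rule n T A1 \<rho>1" "quadrature_rule n T A2 \<rho>2"
    using assms(3,4) by (auto simp: PULB_rule_def)
  have moments: "(\<Sum>a\<in>A1. \<rho>1 a * (1 + a) ^ k) = (\<Sum>a\<in>A2. \<rho>2 a * (1 + a) ^ k)" for k
    using PULB_rule_sum_le[OF assms(3) rules(2) abs_monotone_shifted_power]
      PULB_rule_sum_le[OF assms(4) rules(1) abs_monotone_shifted_power]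
    by (rule antisym)
  have "finite A1" "finite A2" "\<forall>a\<in>A1. \<rho>1 a \<noteq> 0" "\<forall>a\<in>A2. \<rho>2 a \<noteq> 0"
    using rules by (auto simp: quadrature_rule_def)
  moreover have "inj_on (\<lambda>a. 1 + a) (A1 \<union> A2)"
    by (simp add: inj_on_def)
  ultimately show ?thesis
    using weighted_node_sets_eq_if_moments_eq moments by blast
qed

end
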